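(* For all $x\in[0,1]$, $$\arcsin x \le \frac{\frac{\pi}{\pi-2}\,x}{\frac{2}{\pi-2}+\sqrt{1-x^2}},$$ with equality at both endpoints $x=0$ and $x=1$. *)

theory Defs
  imports Complex_Main
begin

end

theory Submission
  imports Defs "HOL-Analysis.Complex_Transcendental"
begin

text \<open>Substituting \<open>x = sin t\<close> with \<open>t \<in> [0, pi/2]\<close>, the inequality becomes
  \<open>t (2 + (pi - 2) cos t) \<le> pi sin t\<close>, i.e. nonnegativity of
  \<open>defect t = pi sin t - 2t - (pi - 2) t cos t\<close>, which vanishes at both ends of the interval.
  The fourth derivative of \<open>defect\<close> is nonpositive on \<open>[0, pi/2]\<close>. Going back up, a function
  whose derivative is first nonnegative and then nonpositive first increases and then decreases,
  so from its values at the endpoints it inherits the same sign pattern; for \<open>defect\<close> itself,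
  which is zero at both ends, this gives nonnegativity.\<close>

definition nonneg_then_nonpos_on :: "real \<Rightarrow> real \<Rightarrow> (real \<Rightarrow> real) \<Rightarrow> bool" where
  "nonneg_then_nonpos_on a b h \<longleftrightarrow>
     (\<exists>c\<in>{a..b}. (\<forall>t\<in>{a..c}. 0 \<le> h t) \<and> (\<forall>t\<in>{c..b}. h t \<le> 0))"

lemma mono_on_antimono_on_of_deriv:
  fixes h h' :: "real \<Rightarrow> real"
  assumes deriv: "\<And>t. t \<in> {a..b} \<Longrightarrow> (h has_real_derivative h' t) (at t)"
    and pattern: "nonneg_then_nonpos_on a b h'"
  shows "\<exists>c\<in>{a..b}. mono_on {a..c} h \<and> antimono_on {c..b} h"
proof -
  obtain c where c: "c \<in> {a..b}" and up: "\<forall>t\<in>{a..c}. 0 \<le> h' t"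
    and down: "\<forall>t\<in>{c..b}. h' t \<le> 0"
    using pattern unfolding nonneg_then_nonpos_on_def by blast
  have "mono_on {a..c} h"
  proof (rule monotone_onI)
    fix x y assume xy: "x \<in> {a..c}" "y \<in> {a..c}" "x \<le> y"
    show "h x \<le> h y"
    proof (rule DERIV_nonneg_imp_nondecreasing[OF \<open>x \<le> y\<close>])
      fix t assume "x \<le> t" "t \<le> y"
      then show "\<exists>d. (h has_real_derivative d) (at t) \<and> 0 \<le> d"
        using xy c up deriv by (intro exI[of _ "h' t"]) auto
    qed
  qed
  moreover have "antimono_on {c..b} h"
  proof (rule monotone_onI)
    fix x y assume xy: "x \<in> {c..b}" "y \<in> {c..b}" "x \<le> y"
    show "h y \<le> h x"
    proof (rule DERIV_nonpos_imp_nonincreasing[OF \<open>x \<le> y\<close>])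
      fix t assume "x \<le> t" "t \<le> y"
      then show "\<exists>d. (h has_real_derivative d) (at t) \<and> d \<le> 0"
        using xy c down deriv by (intro exI[of _ "h' t"]) auto
    qed
  qed
  ultimately show ?thesis
    using c by blast
qed

lemma nonneg_then_nonpos_on_of_deriv:
  fixes h h' :: "real \<Rightarrow> real"
  assumes deriv: "\<And>t. t \<in> {a..b} \<Longrightarrow> (h has_real_derivative h' t) (at t)"
    and pattern: "nonneg_then_nonpos_on a b h'"
    and left: "0 \<le> h a" and right: "h b \<le> 0"
  shows "nonneg_then_nonpos_on a b h"
proof -
  obtain c where c: "c \<in> {a..b}" and up: "mono_on {a..c} h" and down: "antimono_on {c..b} h"
    using mono_on_antimono_on_of_deriv[OF deriv pattern] by blast
  have "continuous_on {c..b} h"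
  proof (intro continuous_at_imp_continuous_on ballI)
    fix t assume "t \<in> {c..b}"
    then show "isCont h t"
      using c by (intro DERIV_isCont[OF deriv]) auto
  qed
  moreover have "0 \<le> h c"
    using left monotone_onD[OF up, of a c] c by auto
  ultimately obtain d where d: "c \<le> d" "d \<le> b" "h d = 0"
    using IVT2'[of h b 0 c] right c by auto
  have "0 \<le> h t" if "t \<in> {a..d}" for t
  proof (cases "t \<le> c")
    case True
    then show ?thesis
      using left monotone_onD[OF up, of a t] that by auto
  next
    case False
    then show ?thesis
      using monotone_onD[OF down, of t d] d that by auto
  qed
  moreover have "h t \<le> 0" if "t \<in> {d..b}" for t
    using monotone_onD[OF down, of d t] d that by auto
  ultimately show ?thesis
    unfolding nonneg_then_nonpos_on_def using c d by (intro bexI[of _ d]) auto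
qed

lemma nonneg_of_deriv_nonneg_then_nonpos:
  fixes h h' :: "real \<Rightarrow> real"
  assumes deriv: "\<And>t. t \<in> {a..b} \<Longrightarrow> (h has_real_derivative h' t) (at t)"
    and pattern: "nonneg_then_nonpos_on a b h'"
    and left: "0 \<le> h a" and right: "0 \<le> h b"
    and t: "t \<in> {a..b}"
  shows "0 \<le> h t"
proof -
  obtain c where c: "c \<in> {a..b}" and up: "mono_on {a..c} h" and down: "antimono_on {c..b} h"
    using mono_on_antimono_on_of_deriv[OF deriv pattern] by blast
  show ?thesis
  proof (cases "t \<le> c")
    case True
    then show ?thesis
      using left t monotone_onD[OF up, of a t] by auto
  next
    case False
    then show ?thesis
      using right t c monotone_onD[OF down, of t b] by auto
  qed
qed

definition defect :: "real \<Rightarrow> real" where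
  "defect t = pi * sin t - 2 * t - (pi - 2) * t * cos t"

definition defect1 :: "real \<Rightarrow> real" where
  "defect1 t = 2 * cos t - 2 + (pi - 2) * t * sin t"

definition defect2 :: "real \<Rightarrow> real" where
  "defect2 t = (pi - 4) * sin t + (pi - 2) * t * cos t"

definition defect3 :: "real \<Rightarrow> real" where
  "defect3 t = (2 * pi - 6) * cos t - (pi - 2) * t * sin t"

definition defect4 :: "real \<Rightarrow> real" where
  "defect4 t = - (3 * pi - 8) * sin t - (pi - 2) * t * cos t"

lemma has_real_derivative_defect: "(defect has_real_derivative defect1 t) (at t)"
  unfolding defect_def [abs_def] defect1_def
  by (auto intro!: derivative_eq_intros simp: algebra_simps)

lemma has_real_derivative_defect1: "(defect1 has_real_derivative defect2 t) (at t)"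
  unfolding defect1_def [abs_def] defect2_def
  by (auto intro!: derivative_eq_intros simp: algebra_simps)

lemma has_real_derivative_defect2: "(defect2 has_real_derivative defect3 t) (at t)"
  unfolding defect2_def [abs_def] defect3_def
  by (auto intro!: derivative_eq_intros simp: algebra_simps)

lemma has_real_derivative_defect3: "(defect3 has_real_derivative defect4 t) (at t)"
  unfolding defect3_def [abs_def] defect4_def
  by (auto intro!: derivative_eq_intros simp: algebra_simps)

lemma defect4_nonpos:
  assumes "t \<in> {0..pi/2}"
  shows "defect4 t \<le> 0"
proof -
  have "0 \<le> (3 * pi - 8) * sin t"
    using assms pi_gt3 by (intro mult_nonneg_nonneg sin_ge_zero) auto
  moreover have "0 \<le> (pi - 2) * t * cos t"
    using assms pi_gt3 by (intro mult_nonneg_nonneg cos_ge_zero) auto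
  ultimately show ?thesis
    unfolding defect4_def by linarith
qed

lemma nonneg_then_nonpos_on_defect4: "nonneg_then_nonpos_on 0 (pi/2) defect4"
  unfolding nonneg_then_nonpos_on_def
  using defect4_nonpos by (intro bexI[of _ 0]) (auto simp: defect4_def)

lemma nonneg_then_nonpos_on_defect3: "nonneg_then_nonpos_on 0 (pi/2) defect3"
proof (rule nonneg_then_nonpos_on_of_deriv[OF has_real_derivative_defect3
    nonneg_then_nonpos_on_defect4])
  show "0 \<le> defect3 0"
    using pi_gt3 by (simp add: defect3_def)
  have "0 \<le> (pi - 2) * (pi / 2)"
    using pi_gt3 by simp
  then show "defect3 (pi/2) \<le> 0"
    by (simp add: defect3_def)
qed

lemma nonneg_then_nonpos_on_defect2: "nonneg_then_nonpos_on 0 (pi/2) defect2"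
proof (rule nonneg_then_nonpos_on_of_deriv[OF has_real_derivative_defect2
    nonneg_then_nonpos_on_defect3])
  show "0 \<le> defect2 0"
    by (simp add: defect2_def)
  show "defect2 (pi/2) \<le> 0"
    using pi_less_4 by (simp add: defect2_def)
qed

lemma pi_minus_2_times_pi_le_4: "(pi - 2) * pi \<le> 4"
proof -
  have "(pi - 2) * pi \<le> 1.2 * 3.2"
    using pi_approx by (intro mult_mono) auto
  then show ?thesis by simp
qed

lemma nonneg_then_nonpos_on_defect1: "nonneg_then_nonpos_on 0 (pi/2) defect1"
proof (rule nonneg_then_nonpos_on_of_deriv[OF has_real_derivative_defect1
    nonneg_then_nonpos_on_defect2])
  show "0 \<le> defect1 0"
    by (simp add: defect1_def)
  show "defect1 (pi/2) \<le> 0"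
    using pi_minus_2_times_pi_le_4 by (simp add: defect1_def)
qed

lemma defect_nonneg:
  assumes "t \<in> {0..pi/2}"
  shows "0 \<le> defect t"
proof (rule nonneg_of_deriv_nonneg_then_nonpos[OF has_real_derivative_defect
    nonneg_then_nonpos_on_defect1 _ _ assms])
  show "0 \<le> defect 0"
    by (simp add: defect_def)
  show "0 \<le> defect (pi/2)"
    by (simp add: defect_def)
qed

lemma arcsin_mult_le:
  assumes "0 \<le> x" "x \<le> 1"
  shows "arcsin x * (2 + (pi - 2) * sqrt (1 - x\<^sup>2)) \<le> pi * x"
proof -
  have "arcsin x \<in> {0..pi/2}"
    using assms arcsin_bounded[of x] by (auto simp: arcsin_nonneg)
  then have "0 \<le> defect (arcsin x)"
    by (rule defect_nonneg)
  then show ?thesis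
    using assms by (simp add: defect_def cos_arcsin algebra_simps)
qed

theorem mainTheorem1:
  shows "(\<forall>x::real. 0 \<le> x \<and> x \<le> 1 \<longrightarrow>
            arcsin x \<le> (pi / (pi - 2) * x) / (2 / (pi - 2) + sqrt (1 - x\<^sup>2)))
       \<and> arcsin 0 = (pi / (pi - 2) * 0) / (2 / (pi - 2) + sqrt (1 - 0\<^sup>2))
       \<and> arcsin 1 = (pi / (pi - 2) * 1) / (2 / (pi - 2) + sqrt (1 - 1\<^sup>2))"
proof (intro conjI allI impI)
  fix x :: real
  assume x: "0 \<le> x \<and> x \<le> 1"
  have pi_minus_2: "0 < pi - 2"
    using pi_gt3 by simp
  have "0 \<le> sqrt (1 - x\<^sup>2)"
    using x by (simp add: power_le_one)
  then have denominator: "0 < 2 + (pi - 2) * sqrt (1 - x\<^sup>2)"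
    using pi_minus_2 by (simp add: add_pos_nonneg)
  have "arcsin x \<le> pi * x / (2 + (pi - 2) * sqrt (1 - x\<^sup>2))"
    using arcsin_mult_le x denominator by (simp add: pos_le_divide_eq)
  also have "2 + (pi - 2) * sqrt (1 - x\<^sup>2) = (pi - 2) * (2 / (pi - 2) + sqrt (1 - x\<^sup>2))"
    using pi_minus_2 by (simp add: field_simps)
  also have "pi * x / \<dots> = (pi / (pi - 2) * x) / (2 / (pi - 2) + sqrt (1 - x\<^sup>2))"
    by simp
  finally show "arcsin x \<le> (pi / (pi - 2) * x) / (2 / (pi - 2) + sqrt (1 - x\<^sup>2))" .
next
  show "arcsin 0 = (pi / (pi - 2) * 0) / (2 / (pi - 2) + sqrt (1 - 0\<^sup>2))"
    by simp
next
  show "arcsin 1 = (pi / (pi - 2) * 1) / (2 / (pi - 2) + sqrt (1 - 1\<^sup>2))"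
    using pi_gt3 by simp
qed

end
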